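(* Let $(\mathbb H,\|\cdot\|)$ be a separable real Hilbert space, $c>0$, $\mathcal X=\{x\in\mathbb H:\|x\|\le c\}$, and let $(X_i)_{i\ge1}$ be a centered $\mathcal X$-valued process with $\mathbb E\|X_i\|^2\le\sigma^2$ for all $i$ (some $\sigma>0$). Let $\tau(k)$ be its $\tau$-mixing coefficients and, for $n\ge1$, \[ \ell^\star:=\max\Big(\Big\{1\le\ell\le n:\ \tau\big(\lfloor n/\ell\rfloor\big)\le \frac{c}{\ell}\vee\frac{\sigma}{\sqrt\ell}\Big\}\cup\{1\}\Big). \] Then for every $\eta\in(0,\tfrac12]$, with probability at least $1-\eta$, \[ \Big\|\frac1n\sum_{i=1}^nX_i\Big\|\le\log\Big(\frac2\eta\Big)\Big(\frac{13\sigma}{\sqrt{\ell^\star}}+\frac{21c}{\ell^\star}\Big). \]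
   Context: $\tau$-mixing coefficients: let $\mathcal C$ be the space of bounded Lipschitz real functions on $\mathcal X$ and $C(f)=\sup\{|f(s)-f(t)|/\|s-t\|: s,t\in\mathcal X,s\ne t\}$ the Lipschitz seminorm, $\mathcal C_1=\{f\in\mathcal C:C(f)\le1\}$, $\mathcal M_i=\sigma(X_1,\dots,X_i)$. Then $\tau(k)=\sup\{\|\mathbb E[\varphi(X_{i+k})\mid\mathcal M_i]-\mathbb E[\varphi(X_{i+k})]\|_{L_\infty(\mathbb P)}:\varphi\in\mathcal C_1,i\ge1\}$ for $k\ge1$. "Centered" means $\mathbb E X_i=0$. $a\vee b=\max(a,b)$. *)

theory Defs
  imports "HOL-Probability.Probability"
begin

definition lipC1 :: "real \<Rightarrow> ('h::real_normed_vector \<Rightarrow> real) set" where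
  "lipC1 c = {\<phi>. bounded (\<phi> ` cball 0 c) \<and> 1-lipschitz_on (cball 0 c) \<phi>}"

definition hist :: "'a measure \<Rightarrow> (nat \<Rightarrow> 'a \<Rightarrow> 'h::topological_space) \<Rightarrow> nat \<Rightarrow> 'a measure" where
  "hist M X i = sigma (space M)
     {X j -` A \<inter> space M | j A. j \<in> {1..i} \<and> A \<in> sets borel}"

definition tau_mix :: "'a measure \<Rightarrow> (nat \<Rightarrow> 'a \<Rightarrow> 'h::real_normed_vector) \<Rightarrow> real \<Rightarrow> nat \<Rightarrow> ereal" where
  "tau_mix M X c k =
     (SUP p \<in> {(\<phi>, i). \<phi> \<in> lipC1 c \<and> i \<ge> (1::nat)}.
        esssup M (\<lambda>\<omega>. ereal \<bar>real_cond_exp M (hist M X (snd p)) (\<lambda>\<omega>. fst p (X (snd p + k) \<omega>)) \<omega>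
                         - (\<integral>\<omega>'. fst p (X (snd p + k) \<omega>') \<partial>M)\<bar>))"

definition lstar :: "'a measure \<Rightarrow> (nat \<Rightarrow> 'a \<Rightarrow> 'h::real_normed_vector) \<Rightarrow> real \<Rightarrow> real \<Rightarrow> nat \<Rightarrow> nat" where
  "lstar M X c \<sigma> n = Max ({l \<in> {1..n}. tau_mix M X c (n div l)
        \<le> ereal (max (c / real l) (\<sigma> / sqrt (real l)))} \<union> {1})"

end

theory Submission
  imports Defs
begin

(*
  The norm is smoothed to h(x) = sqrt(|x|^2 + 1/mu^2), and Phi(x) = exp(mu h(x)) satisfies
  Phi(x + d) <= Phi(x) (1 + mu <x / h(x), d> + 3 mu^2 |d|^2) whenever mu |d| <= 1/2.
  If x is a function of the past and d = X_{i+k}, the direction x / h(x) is past-measurable with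
  norm at most 1, so tau-mixing bounds the conditional first-order term by mu tau(k) and the
  second-order term by 3 mu^2 (sigma^2 + 2 c tau(k)); hence E Phi grows geometrically along
  every arithmetic progression of step k. For k = n div l the sum splits into k such
  progressions, each of length at least l; convexity of exp and Markov's inequality with
  theta = 1 / (2 sigma / sqrt l + 2 c / l) give the tail bound once tau(k) <= max(c/l, sigma/sqrt l).
  When l* = 1 the bound is trivial since the mean has norm at most c.
*)

lemma exp_le_quadratic:
  fixes w :: real
  assumes "\<bar>w\<bar> \<le> 1"
  shows "exp w \<le> 1 + w + 3/2 * w^2"
proof -
  obtain t where t: "\<bar>t\<bar> \<le> \<bar>w\<bar>" "exp w = (\<Sum>m<2. w ^ m / fact m) + exp t / fact 2 * w ^ 2"
    using Maclaurin_exp_le[of w 2] by blast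
  have "exp t \<le> exp 1" using t(1) assms by simp
  also have "exp (1::real) \<le> 3" using exp_bound[of 1] by simp
  finally have "exp t / 2 * w^2 \<le> 3/2 * w^2" by (intro mult_right_mono) auto
  then show ?thesis using t(2) by (simp add: numeral_2_eq_2)
qed

definition smooth_norm :: "real \<Rightarrow> 'h::real_inner \<Rightarrow> real" where
  "smooth_norm \<mu> x = sqrt ((norm x)^2 + 1/\<mu>^2)"

definition smooth_exp :: "real \<Rightarrow> 'h::real_inner \<Rightarrow> real" where
  "smooth_exp \<mu> x = exp (\<mu> * smooth_norm \<mu> x)"

lemma smooth_norm_ge_inverse: "\<mu> > 0 \<Longrightarrow> 1/\<mu> \<le> smooth_norm \<mu> x"
  unfolding smooth_norm_def by (rule real_le_rsqrt) (auto simp: power_divide)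

lemma smooth_norm_pos: "\<mu> > 0 \<Longrightarrow> smooth_norm \<mu> x > 0"
  using smooth_norm_ge_inverse[of \<mu> x] by (meson divide_pos_pos less_le_trans zero_less_one)

lemma norm_le_smooth_norm: "norm x \<le> smooth_norm \<mu> x"
  unfolding smooth_norm_def by (rule real_le_rsqrt) auto

lemma smooth_norm_le: "\<mu> > 0 \<Longrightarrow> smooth_norm \<mu> x \<le> norm x + 1/\<mu>"
  unfolding smooth_norm_def
  by (rule real_sqrt_le_iff'[THEN iffD2]) (auto simp: power2_sum power_divide)

lemma smooth_exp_zero: "\<mu> > 0 \<Longrightarrow> smooth_exp \<mu> (0::'h::real_inner) = exp 1"
  unfolding smooth_exp_def smooth_norm_def by (simp add: real_sqrt_divide)

lemma smooth_exp_pos: "smooth_exp \<mu> x > 0"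
  unfolding smooth_exp_def by simp

lemma exp_norm_le_smooth_exp: "\<mu> > 0 \<Longrightarrow> exp (\<mu> * norm x) \<le> smooth_exp \<mu> x"
  unfolding smooth_exp_def using norm_le_smooth_norm[of x \<mu>] by simp

lemma smooth_exp_le:
  assumes "\<mu> > 0" "norm x \<le> R"
  shows "smooth_exp \<mu> x \<le> exp (\<mu> * R + 1)"
proof -
  have "\<mu> * smooth_norm \<mu> x \<le> \<mu> * (R + 1/\<mu>)"
    using smooth_norm_le[of \<mu> x] assms by (intro mult_left_mono) auto
  then show ?thesis unfolding smooth_exp_def using assms(1) by (simp add: distrib_left)
qed

lemma norm_smooth_direction_le: "\<mu> > 0 \<Longrightarrow> norm (x /\<^sub>R smooth_norm \<mu> x) \<le> 1"
  using smooth_norm_pos[of \<mu> x] norm_le_smooth_norm[of x \<mu>] by (simp add: field_simps)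

text \<open>Concavity of the square root: it lies below its tangent at the square of the smooth norm of x.\<close>

lemma smooth_norm_add_le:
  assumes "\<mu> > 0"
  shows "smooth_norm \<mu> (x + d)
           \<le> smooth_norm \<mu> x + (x \<bullet> d) / smooth_norm \<mu> x + (norm d)^2 / (2 * smooth_norm \<mu> x)"
proof -
  define H where "H = smooth_norm \<mu> x"
  define e where "e = 2 * (x \<bullet> d) + (norm d)^2"
  have H: "H > 0" unfolding H_def using smooth_norm_pos[OF assms] .
  have H2: "H^2 = (norm x)^2 + 1/\<mu>^2" unfolding H_def smooth_norm_def by simp
  have "(norm (x + d))^2 = (norm x)^2 + e"
    unfolding e_def power2_norm_eq_inner by (simp add: inner_add inner_commute)
  then have radicand: "(norm (x + d))^2 + 1/\<mu>^2 = H^2 + e" using H2 by simp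
  moreover have "0 \<le> (norm (x + d))^2 + 1/\<mu>^2" by simp
  ultimately have "-(H^2) \<le> e" by linarith
  then have "-(H^2) / (2 * H) \<le> e / (2 * H)" using H by (intro divide_right_mono) auto
  then have "0 \<le> H + e / (2 * H)" using H by (simp add: power2_eq_square)
  moreover have "H^2 + e \<le> (H + e / (2 * H))^2"
    using H by (simp add: power2_sum field_simps power2_eq_square)
  ultimately have "smooth_norm \<mu> (x + d) \<le> H + e / (2 * H)"
    unfolding smooth_norm_def radicand by (rule real_le_lsqrt)
  also have "H + e / (2 * H) = H + (x \<bullet> d) / H + (norm d)^2 / (2 * H)"
    unfolding e_def using H by (simp add: field_simps)
  finally show ?thesis unfolding H_def .
qed

lemma scaled_smooth_norm_add_le:
  assumes \<mu>: "\<mu> > 0"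
  shows "\<mu> * smooth_norm \<mu> (x + d)
           \<le> \<mu> * smooth_norm \<mu> x + \<mu> * ((x /\<^sub>R smooth_norm \<mu> x) \<bullet> d) + (\<mu> * norm d)^2 / 2"
proof -
  define H where "H = smooth_norm \<mu> x"
  have H: "H > 0" unfolding H_def using smooth_norm_pos[OF \<mu>] .
  have "1/\<mu> \<le> H" unfolding H_def using smooth_norm_ge_inverse[OF \<mu>] .
  then have "1/H \<le> \<mu>" using H \<mu> by (simp add: field_simps)
  then have "\<mu> * (norm d)^2 / 2 * (1/H) \<le> \<mu> * (norm d)^2 / 2 * \<mu>" using \<mu> by (intro mult_left_mono) auto
  then have "\<mu> * ((norm d)^2 / (2 * H)) \<le> (\<mu> * norm d)^2 / 2" by (simp add: power2_eq_square mult_ac)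
  moreover have "\<mu> * ((x \<bullet> d) / H) = \<mu> * ((x /\<^sub>R H) \<bullet> d)" by (simp add: divide_inverse mult_ac)
  ultimately show ?thesis
    using mult_left_mono[OF smooth_norm_add_le[OF \<mu>, of x d], of \<mu>] \<mu>
    unfolding H_def[symmetric] by (simp add: distrib_left)
qed

lemma smooth_exp_add_le:
  fixes x d :: "'h::real_inner"
  assumes \<mu>: "\<mu> > 0" and d: "\<mu> * norm d \<le> 1/2"
  shows "smooth_exp \<mu> (x + d)
           \<le> smooth_exp \<mu> x * (1 + \<mu> * ((x /\<^sub>R smooth_norm \<mu> x) \<bullet> d) + 3 * \<mu>^2 * (norm d)^2)"
proof -
  define v where "v = \<mu> * ((x /\<^sub>R smooth_norm \<mu> x) \<bullet> d)"
  define b where "b = \<mu> * norm d"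
  define w where "w = v + b^2 / 2"
  have b: "0 \<le> b" "b \<le> 1/2" unfolding b_def using \<mu> d by auto
  have "smooth_exp \<mu> (x + d) \<le> smooth_exp \<mu> x * exp w"
    using scaled_smooth_norm_add_le[OF \<mu>, of x d]
    unfolding smooth_exp_def w_def v_def b_def by (simp add: exp_add[symmetric])
  have "\<bar>v\<bar> \<le> \<mu> * (norm (x /\<^sub>R smooth_norm \<mu> x) * norm d)"
    unfolding v_def abs_mult by (intro mult_mono Cauchy_Schwarz_ineq2) (use \<mu> in auto)
  also have "\<dots> \<le> b"
    unfolding b_def using norm_smooth_direction_le[OF \<mu>, of x] \<mu>
    by (intro mult_left_mono mult_left_le_one_le) auto
  finally have "\<bar>v\<bar> \<le> b" .
  moreover have "b^2 / 2 \<le> b / 4" using mult_left_mono[OF b(2) b(1)] by (simp add: power2_eq_square)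
  ultimately have w: "\<bar>w\<bar> \<le> 5/4 * b"
    unfolding w_def abs_le_iff using zero_le_power2[of b] by linarith
  then have "w^2 \<le> (5/4 * b)^2" using b(1) by (metis abs_le_square_iff abs_of_nonneg
        mult_nonneg_nonneg zero_le_divide_iff zero_le_numeral)
  also have "(5/4 * b)^2 = 25/16 * b^2" by (simp add: power2_eq_square)
  finally have "1 + w + 3/2 * w^2 \<le> 1 + v + 3 * b^2"
    using w_def zero_le_power2[of b] by linarith
  then have "exp w \<le> 1 + v + 3 * b^2" using exp_le_quadratic[of w] w b by linarith
  then have "smooth_exp \<mu> x * exp w \<le> smooth_exp \<mu> x * (1 + v + 3 * b^2)"
    using smooth_exp_pos[of \<mu> x] by (intro mult_left_mono) auto
  with \<open>smooth_exp \<mu> (x + d) \<le> smooth_exp \<mu> x * exp w\<close>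
  show ?thesis unfolding v_def b_def by (simp add: power_mult_distrib mult.assoc)
qed

lemma borel_measurable_smooth_exp:
  assumes "T \<in> borel_measurable N"
  shows "(\<lambda>\<omega>. smooth_exp \<mu> (T \<omega>)) \<in> borel_measurable N"
  unfolding smooth_exp_def smooth_norm_def using assms
  by (rule measurable_compose[OF _ borel_measurable_continuous_onI]) (intro continuous_intros)

lemma borel_measurable_smooth_direction:
  fixes T :: "'b \<Rightarrow> 'h::{real_inner, second_countable_topology}"
  assumes "T \<in> borel_measurable N"
  shows "(\<lambda>\<omega>. T \<omega> /\<^sub>R smooth_norm \<mu> (T \<omega>)) \<in> borel_measurable N"
proof -
  have "(\<lambda>\<omega>. smooth_norm \<mu> (T \<omega>)) \<in> borel_measurable N"
    unfolding smooth_norm_def using assms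
    by (rule measurable_compose[OF _ borel_measurable_continuous_onI]) (intro continuous_intros)
  then show ?thesis using assms by (intro borel_measurable_scaleR borel_measurable_inverse)
qed

lemma lipC1_bounded:
  assumes "\<phi> \<in> lipC1 c"
  obtains K where "\<And>y. norm y \<le> c \<Longrightarrow> \<bar>\<phi> y\<bar> \<le> K"
proof -
  have "bounded (\<phi> ` cball 0 c)" using assms unfolding lipC1_def by auto
  then obtain K where "\<forall>z\<in>\<phi> ` cball 0 c. norm z \<le> K" unfolding bounded_iff by auto
  then show ?thesis by (intro that) auto
qed

lemma lipC1_inner_normalized:
  fixes v :: "'h::real_inner"
  assumes "v \<noteq> 0"
  shows "(\<lambda>y. (v \<bullet> y) / norm v) \<in> lipC1 c"
proof -
  have Lip: "dist ((v \<bullet> x) / norm v) ((v \<bullet> y) / norm v) \<le> dist x y" for x y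
  proof -
    have "dist ((v \<bullet> x) / norm v) ((v \<bullet> y) / norm v) = \<bar>v \<bullet> (x - y)\<bar> / norm v"
      by (simp add: dist_real_def inner_diff_right diff_divide_distrib[symmetric] abs_div_pos)
    also have "\<dots> \<le> norm v * norm (x - y) / norm v"
      using assms by (intro divide_right_mono Cauchy_Schwarz_ineq2) auto
    finally show ?thesis using assms by (simp add: dist_norm)
  qed
  then have "\<bar>(v \<bullet> y) / norm v\<bar> \<le> c" if "norm y \<le> c" for y
    using Lip[of y 0] that by (simp add: dist_real_def)
  then have "\<forall>z \<in> (\<lambda>y. (v \<bullet> y) / norm v) ` cball 0 c. norm z \<le> c"
    by auto
  then have "bounded ((\<lambda>y. (v \<bullet> y) / norm v) ` cball 0 c)"
    unfolding bounded_iff by blast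
  moreover have "1-lipschitz_on (cball 0 c) (\<lambda>y. (v \<bullet> y) / norm v)"
    using Lip by (intro lipschitz_onI) auto
  ultimately show ?thesis unfolding lipC1_def by simp
qed

lemma lipC1_norm_sq:
  assumes "c > 0"
  shows "(\<lambda>y::'h::real_normed_vector. (norm y)^2 / (2 * c)) \<in> lipC1 c"
proof -
  have "(norm y)^2 / (2 * c) \<le> c^2 / (2 * c)" if "norm y \<le> c" for y :: 'h
    using that assms by (intro divide_right_mono power_mono) auto
  then have "bounded ((\<lambda>y::'h. (norm y)^2 / (2 * c)) ` cball 0 c)"
    unfolding bounded_iff using assms by force
  moreover have "1-lipschitz_on (cball 0 c) (\<lambda>y::'h. (norm y)^2 / (2 * c))"
  proof (rule lipschitz_onI)
    fix x y :: 'h assume "x \<in> cball 0 c" "y \<in> cball 0 c"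
    then have "\<bar>norm x - norm y\<bar> * (norm x + norm y) \<le> norm (x - y) * (2 * c)"
      by (intro mult_mono norm_triangle_ineq3) auto
    moreover have "(norm x)^2 - (norm y)^2 = (norm x - norm y) * (norm x + norm y)"
      by (simp add: power2_eq_square algebra_simps)
    then have "\<bar>(norm x)^2 - (norm y)^2\<bar> = \<bar>norm x - norm y\<bar> * (norm x + norm y)"
      by (simp add: abs_mult)
    ultimately show "dist ((norm x)^2 / (2 * c)) ((norm y)^2 / (2 * c)) \<le> 1 * dist x y"
      using assms by (simp add: dist_real_def dist_norm diff_divide_distrib[symmetric] divide_le_eq)
  qed simp
  ultimately show ?thesis unfolding lipC1_def by simp
qed

lemma (in finite_measure) integrable_bounded:
  fixes f :: "'a \<Rightarrow> real"
  assumes "f \<in> borel_measurable M" "\<And>x. x \<in> space M \<Longrightarrow> \<bar>f x\<bar> \<le> B"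
  shows "integrable M f"
  using assms by (intro integrable_const_bound[where B=B] AE_I2) auto

lemma (in finite_measure) integrable_mult_bounded:
  fixes f g :: "'a \<Rightarrow> real"
  assumes "f \<in> borel_measurable M" "g \<in> borel_measurable M"
    and "\<And>x. x \<in> space M \<Longrightarrow> \<bar>f x\<bar> \<le> A" "\<And>x. x \<in> space M \<Longrightarrow> \<bar>g x\<bar> \<le> C"
  shows "integrable M (\<lambda>x. f x * g x)"
proof (rule integrable_bounded[where B="A * C"])
  show "\<bar>f x * g x\<bar> \<le> A * C" if "x \<in> space M" for x
    unfolding abs_mult using assms(3,4)[OF that] by (meson abs_ge_zero mult_mono order_trans)
qed (use assms(1,2) in measurable)

lemma (in finite_measure) integrable_smooth_exp:
  assumes "T \<in> borel_measurable M" "\<mu> > 0" "\<And>\<omega>. \<omega> \<in> space M \<Longrightarrow> norm (T \<omega>) \<le> R"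
  shows "integrable M (\<lambda>\<omega>. smooth_exp \<mu> (T \<omega>))"
proof (rule integrable_bounded[where B="exp (\<mu> * R + 1)"])
  show "\<bar>smooth_exp \<mu> (T \<omega>)\<bar> \<le> exp (\<mu> * R + 1)" if "\<omega> \<in> space M" for \<omega>
    using smooth_exp_le[OF assms(2) assms(3)[OF that]] smooth_exp_pos[of \<mu> "T \<omega>"] by simp
qed (rule borel_measurable_smooth_exp[OF assms(1)])

lemma (in finite_measure) integrable_exp_norm:
  assumes "Z \<in> borel_measurable M" "a \<ge> 0" "\<And>\<omega>. \<omega> \<in> space M \<Longrightarrow> norm (Z \<omega>) \<le> R"
  shows "integrable M (\<lambda>\<omega>. exp (a * norm (Z \<omega>)))"
proof (rule integrable_bounded[where B="exp (a * R)"])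
  show "\<bar>exp (a * norm (Z \<omega>))\<bar> \<le> exp (a * R)" if "\<omega> \<in> space M" for \<omega>
    using assms(2) assms(3)[OF that] by (simp add: mult_left_mono)
qed (use assms(1) in measurable)

lemma (in prob_space) prob_le_ge_exp_moment:
  assumes Z: "Z \<in> borel_measurable M" "integrable M (\<lambda>\<omega>. exp (\<theta> * Z \<omega>))"
    and \<theta>: "\<theta> > 0"
  shows "prob {\<omega> \<in> space M. Z \<omega> \<le> t} \<ge> 1 - (\<integral>\<omega>. exp (\<theta> * Z \<omega>) \<partial>M) / exp (\<theta> * t)"
proof -
  have "{\<omega> \<in> space M. \<not> Z \<omega> \<le> t} \<subseteq> {\<omega> \<in> space M. exp (\<theta> * t) \<le> exp (\<theta> * Z \<omega>)}"
    using \<theta> by auto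
  then have "prob {\<omega> \<in> space M. \<not> Z \<omega> \<le> t} \<le> prob {\<omega> \<in> space M. exp (\<theta> * t) \<le> exp (\<theta> * Z \<omega>)}"
    using Z(1) by (intro finite_measure_mono) measurable
  also have "\<dots> \<le> (\<integral>\<omega>. exp (\<theta> * Z \<omega>) \<partial>M) / exp (\<theta> * t)"
    by (rule integral_Markov_inequality_measure[OF Z(2)]) auto
  finally have "prob {\<omega> \<in> space M. \<not> Z \<omega> \<le> t} \<le> (\<integral>\<omega>. exp (\<theta> * Z \<omega>) \<partial>M) / exp (\<theta> * t)" .
  moreover have "{\<omega> \<in> space M. Z \<omega> \<le> t} \<in> events" using Z(1) by measurable
  then have "prob (space M - {\<omega> \<in> space M. Z \<omega> \<le> t}) = 1 - prob {\<omega> \<in> space M. Z \<omega> \<le> t}"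
    by (rule prob_compl)
  moreover have "space M - {\<omega> \<in> space M. Z \<omega> \<le> t} = {\<omega> \<in> space M. \<not> Z \<omega> \<le> t}" by auto
  ultimately show ?thesis by simp
qed

lemma sum_atLeastAtMost_residue_classes:
  fixes f :: "nat \<Rightarrow> 'b::comm_monoid_add"
  assumes "1 \<le> k" "k \<le> n"
  shows "(\<Sum>i\<in>{1..n}. f i) = (\<Sum>r\<in>{1..k}. \<Sum>j\<le>(n - r) div k. f (r + j * k))"
proof -
  have "(\<Sum>i\<in>{1..n}. f i) = (\<Sum>(r, j)\<in>Sigma {1..k} (\<lambda>r. {..(n - r) div k}). f (r + j * k))"
  proof (rule sum.reindex_bij_witness[where i="\<lambda>(r, j). r + j * k"
        and j="\<lambda>i. ((i - 1) mod k + 1, (i - 1) div k)"])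
    fix i assume i: "i \<in> {1..n}"
    have dm: "(i - 1) div k * k + (i - 1) mod k = i - 1" by (rule div_mult_mod_eq)
    then show "(case ((i - 1) mod k + 1, (i - 1) div k) of (r, j) \<Rightarrow> r + j * k) = i"
      and "(case ((i - 1) mod k + 1, (i - 1) div k) of (r, j) \<Rightarrow> f (r + j * k)) = f i"
      using i by auto
    have "1 \<le> i" "i \<le> n" using i by auto
    with dm have "(i - 1) div k * k \<le> n - ((i - 1) mod k + 1)" by linarith
    then have "(i - 1) div k \<le> (n - ((i - 1) mod k + 1)) div k"
      using assms(1) by (simp add: less_eq_div_iff_mult_less_eq)
    then show "((i - 1) mod k + 1, (i - 1) div k) \<in> Sigma {1..k} (\<lambda>r. {..(n - r) div k})"
      using assms(1) by (auto simp: Suc_le_eq)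
  next
    fix b assume "b \<in> Sigma {1..k} (\<lambda>r. {..(n - r) div k})"
    then obtain r j where b: "b = (r, j)" "1 \<le> r" "r \<le> k" "j \<le> (n - r) div k" by auto
    have shift: "r + j * k - 1 = (r - 1) + j * k" using b by simp
    have "(r - 1) mod k = r - 1" "(r - 1) div k = 0" using b by auto
    then have "(r + j * k - 1) mod k = r - 1" "(r + j * k - 1) div k = j"
      unfolding shift using assms(1) by (simp_all only: mod_mult_self1 div_mult_self1)
    then show "(((case b of (r, j) \<Rightarrow> r + j * k) - 1) mod k + 1,
                ((case b of (r, j) \<Rightarrow> r + j * k) - 1) div k) = b"
      using b by simp
    have "j * k \<le> n - r" using b assms(1) by (simp add: less_eq_div_iff_mult_less_eq)
    then show "(case b of (r, j) \<Rightarrow> r + j * k) \<in> {1..n}" using b assms by auto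
  qed
  also have "\<dots> = (\<Sum>r\<in>{1..k}. \<Sum>j\<le>(n - r) div k. f (r + j * k))"
    by (rule sum.Sigma[symmetric]) auto
  finally show ?thesis .
qed

lemma exp_norm_scaled_sum_le:
  fixes T :: "'i \<Rightarrow> 'h::real_normed_vector"
  assumes I: "finite I" "I \<noteq> {}" and m: "\<And>r. r \<in> I \<Longrightarrow> m r > 0" "(\<Sum>r\<in>I. m r) = N"
    and \<theta>: "\<theta> \<ge> 0"
  shows "exp (\<theta> * norm ((1 / N) *\<^sub>R (\<Sum>r\<in>I. T r)))
           \<le> (\<Sum>r\<in>I. m r / N * exp (\<theta> / m r * norm (T r)))"
proof -
  have N: "N > 0" using m I by (metis sum_pos)
  have "\<theta> * norm ((1 / N) *\<^sub>R (\<Sum>r\<in>I. T r)) \<le> \<theta> * ((1 / N) * (\<Sum>r\<in>I. norm (T r)))"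
    using N \<theta> by (intro mult_left_mono) (simp_all add: divide_right_mono norm_sum)
  also have "\<dots> = (\<Sum>r\<in>I. \<theta> * norm (T r) / N)"
    by (simp add: sum_distrib_left sum_divide_distrib)
  also have "\<dots> = (\<Sum>r\<in>I. (m r / N) *\<^sub>R (\<theta> / m r * norm (T r)))"
  proof (rule sum.cong)
    show "\<theta> * norm (T r) / N = (m r / N) *\<^sub>R (\<theta> / m r * norm (T r))" if "r \<in> I" for r
      using m(1)[OF that] by (simp add: field_simps)
  qed simp
  finally have "exp (\<theta> * norm ((1 / N) *\<^sub>R (\<Sum>r\<in>I. T r)))
                  \<le> exp (\<Sum>r\<in>I. (m r / N) *\<^sub>R (\<theta> / m r * norm (T r)))" by simp
  also have "\<dots> \<le> (\<Sum>r\<in>I. m r / N * exp (\<theta> / m r * norm (T r)))"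
    using I m N exp_convex
    by (intro convex_on_sum) (auto simp: sum_divide_distrib[symmetric] less_imp_le)
  finally show ?thesis .
qed

text \<open>With s = sigma / sqrt l, a = c / l and tau the mixing coefficient, the left-hand side is
  the logarithm of the Chernoff bound at level t = L (13 s + 21 a).\<close>

lemma chernoff_exponent_le:
  fixes L s a \<tau> \<theta> :: real
  assumes L: "L \<ge> 1" and s: "s > 0" and a: "a > 0" and \<tau>: "0 \<le> \<tau>" "\<tau> \<le> a + s"
    and \<theta>: "\<theta> = 1 / (2 * s + 2 * a)"
  shows "1 + 4 * \<theta> * \<tau> + 3 * \<theta>^2 * s^2 - \<theta> * (L * (13 * s + 21 * a)) \<le> - L"
proof -
  have \<theta>_pos: "\<theta> > 0" and \<theta>_D: "\<theta> * (2 * s + 2 * a) = 1" unfolding \<theta> using s a by auto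
  have "4 * \<tau> \<le> 1 * (4 * s + 12 * a)" using \<tau> s a by simp
  also have "\<dots> \<le> L * (4 * s + 12 * a)" using L s a by (intro mult_right_mono) auto
  moreover have "L * (4 * s + 12 * a) = L * (13 * s + 21 * a) - 9/2 * L * (2 * s + 2 * a)"
    by (simp add: algebra_simps)
  ultimately have "L * (13 * s + 21 * a) - 4 * \<tau> \<ge> 9/2 * L * (2 * s + 2 * a)" by linarith
  then have "\<theta> * (L * (13 * s + 21 * a) - 4 * \<tau>) \<ge> \<theta> * (9/2 * L * (2 * s + 2 * a))"
    using \<theta>_pos by (intro mult_left_mono) auto
  moreover have "\<theta> * (9/2 * L * (2 * s + 2 * a)) = 9/2 * L * (\<theta> * (2 * s + 2 * a))"
    by (simp only: ac_simps)
  then have "\<theta> * (9/2 * L * (2 * s + 2 * a)) = 9/2 * L" using \<theta>_D by simp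
  moreover have "\<theta> * (L * (13 * s + 21 * a) - 4 * \<tau>) = \<theta> * (L * (13 * s + 21 * a)) - 4 * \<theta> * \<tau>"
    by (simp add: algebra_simps)
  ultimately have main: "\<theta> * (L * (13 * s + 21 * a)) - 4 * \<theta> * \<tau> \<ge> 9/2 * L"
    by linarith
  have "\<theta> * s \<le> \<theta> * (2 * s + 2 * a) / 2" using \<theta>_pos a by (simp add: field_simps)
  then have "\<theta> * s \<le> 1/2" using \<theta>_D by simp
  then have "(\<theta> * s)^2 \<le> (1/2)^2" using \<theta>_pos s by (intro power_mono) auto
  then have "3 * \<theta>^2 * s^2 \<le> 3/4" by (simp add: power_mult_distrib power2_eq_square mult_ac)
  with main L show ?thesis by linarith
qed

lemma ln_two_div_ge_one:
  fixes \<eta> :: real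
  assumes "0 < \<eta>" "\<eta> \<le> 1/2"
  shows "ln (2 / \<eta>) \<ge> 1"
proof -
  have "exp 1 \<le> (3::real)" using exp_bound[of 1] by simp
  then have "\<eta> * exp 1 \<le> 1/2 * 3" using assms by (intro mult_mono) auto
  then have "exp 1 \<le> 2 / \<eta>" using assms by (simp add: field_simps)
  then show ?thesis using assms by (subst ln_ge_iff) auto
qed

lemma lstar_cases:
  "lstar M X c \<sigma> n = 1 \<or>
     lstar M X c \<sigma> n \<in> {1..n} \<and> tau_mix M X c (n div lstar M X c \<sigma> n)
       \<le> ereal (max (c / lstar M X c \<sigma> n) (\<sigma> / sqrt (lstar M X c \<sigma> n)))"
proof -
  let ?A = "{l \<in> {1..n}. tau_mix M X c (n div l) \<le> ereal (max (c / l) (\<sigma> / sqrt l))} \<union> {1}"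
  have "lstar M X c \<sigma> n \<in> ?A" unfolding lstar_def by (rule Max_in) auto
  then show ?thesis by auto
qed

locale bounded_centered_process = prob_space M for M :: "'a measure" +
  fixes X :: "nat \<Rightarrow> 'a \<Rightarrow> 'h::{real_inner, complete_space, second_countable_topology}"
    and c \<sigma> :: real
  assumes c_pos: "c > 0"
    and X_measurable: "\<And>i. i \<ge> 1 \<Longrightarrow> X i \<in> borel_measurable M"
    and norm_X_le: "\<And>i \<omega>. i \<ge> 1 \<Longrightarrow> \<omega> \<in> space M \<Longrightarrow> norm (X i \<omega>) \<le> c"
    and integrable_X: "\<And>i. i \<ge> 1 \<Longrightarrow> integrable M (X i)"
    and integral_X_eq_0: "\<And>i. i \<ge> 1 \<Longrightarrow> (\<integral>\<omega>. X i \<omega> \<partial>M) = 0"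
    and second_moment_X_le: "\<And>i. i \<ge> 1 \<Longrightarrow> (\<integral>\<omega>. (norm (X i \<omega>))^2 \<partial>M) \<le> \<sigma>^2"
begin

lemma space_hist [simp]: "space (hist M X i) = space M"
  unfolding hist_def by (rule space_measure_of) auto

lemma sets_hist:
  "sets (hist M X i) = sigma_sets (space M) {X j -` A \<inter> space M | j A. j \<in> {1..i} \<and> A \<in> sets borel}"
  unfolding hist_def by (rule sets_measure_of) auto

lemma subalgebra_hist: "subalgebra M (hist M X i)"
proof -
  have "sigma_sets (space M) {X j -` A \<inter> space M | j A. j \<in> {1..i} \<and> A \<in> sets borel} \<subseteq> sets M"
    by (rule sets.sigma_sets_subset) (auto intro: measurable_sets[OF X_measurable])
  then show ?thesis unfolding subalgebra_def sets_hist by simp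
qed

lemma sigma_finite_subalgebra_hist: "sigma_finite_subalgebra M (hist M X i)"
  using finite_measure_subalgebra_is_sigma_finite finite_measure_axioms subalgebra_hist
  unfolding finite_measure_subalgebra_def finite_measure_subalgebra_axioms_def by blast

lemma measurable_hist_imp_measurable:
  "f \<in> borel_measurable (hist M X i) \<Longrightarrow> f \<in> borel_measurable M"
  by (rule measurable_from_subalg[OF subalgebra_hist])

lemma X_measurable_hist:
  assumes "1 \<le> j" "j \<le> i"
  shows "X j \<in> borel_measurable (hist M X i)"
proof (rule measurableI)
  fix A :: "'h set" assume "A \<in> sets borel"
  then have "X j -` A \<inter> space M \<in> {X j -` A \<inter> space M | j A. j \<in> {1..i} \<and> A \<in> sets borel}"
    using assms by auto
  then show "X j -` A \<inter> space (hist M X i) \<in> sets (hist M X i)"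
    unfolding sets_hist by auto
qed simp

lemma lipC1_comp_X_measurable:
  assumes "\<phi> \<in> lipC1 c" "j \<ge> 1"
  shows "(\<lambda>\<omega>. \<phi> (X j \<omega>)) \<in> borel_measurable M"
proof -
  have "continuous_on (cball 0 c) \<phi>"
    using assms(1) lipschitz_on_continuous_on unfolding lipC1_def by blast
  then have "(\<lambda>x. indicator (cball 0 c) x *\<^sub>R \<phi> x) \<in> borel_measurable borel"
    by (intro borel_measurable_continuous_on_indicator) auto
  from measurable_compose[OF X_measurable[OF assms(2)] this]
  show ?thesis
    by (rule measurable_cong[THEN iffD1, rotated]) (simp add: indicator_def norm_X_le[OF assms(2)])
qed

lemma norm_sum_X_le:
  assumes "\<And>j. j \<in> J \<Longrightarrow> f j \<ge> 1" "\<omega> \<in> space M"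
  shows "norm (\<Sum>j\<in>J. X (f j) \<omega>) \<le> real (card J) * c"
proof -
  have "norm (\<Sum>j\<in>J. X (f j) \<omega>) \<le> (\<Sum>j\<in>J. norm (X (f j) \<omega>))" by (rule norm_sum)
  also have "\<dots> \<le> (\<Sum>j\<in>J. c)" using assms by (intro sum_mono norm_X_le) auto
  finally show ?thesis by simp
qed

lemma norm_mean_X_le:
  assumes "n \<ge> 1" "\<omega> \<in> space M"
  shows "norm ((1 / real n) *\<^sub>R (\<Sum>i=1..n. X i \<omega>)) \<le> c"
  using norm_sum_X_le[of "{1..n}" id \<omega>] assms by (simp add: field_simps)

lemma prob_norm_mean_le_eq_1:
  assumes "n \<ge> 1" "c \<le> t"
  shows "prob {\<omega> \<in> space M. norm ((1 / real n) *\<^sub>R (\<Sum>i=1..n. X i \<omega>)) \<le> t} = 1"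
proof -
  have "{\<omega> \<in> space M. norm ((1 / real n) *\<^sub>R (\<Sum>i=1..n. X i \<omega>)) \<le> t} = space M"
    using norm_mean_X_le[OF assms(1)] assms(2) by (auto intro: order_trans)
  then show ?thesis by (simp add: prob_space)
qed

lemma integral_smooth_exp_X_le:
  assumes j: "j \<ge> 1" and \<mu>: "\<mu> > 0" "\<mu> * c \<le> 1/2"
  shows "(\<integral>\<omega>. smooth_exp \<mu> (X j \<omega>) \<partial>M) \<le> exp 1 * (1 + 3 * \<mu>^2 * \<sigma>^2)"
proof -
  have pointwise: "smooth_exp \<mu> (X j \<omega>) \<le> exp 1 + 3 * \<mu>^2 * exp 1 * (norm (X j \<omega>))^2"
    if "\<omega> \<in> space M" for \<omega>
  proof -
    have "\<mu> * norm (X j \<omega>) \<le> \<mu> * c" using norm_X_le[OF j that] \<mu>(1) by (intro mult_left_mono) auto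
    with smooth_exp_add_le[OF \<mu>(1), of "X j \<omega>" 0] \<mu>(2) show ?thesis
      by (simp add: smooth_exp_zero[OF \<mu>(1)] algebra_simps)
  qed
  have int_sq: "integrable M (\<lambda>\<omega>. (norm (X j \<omega>))^2)"
  proof (rule integrable_bounded[where B="c^2"])
    show "\<bar>(norm (X j \<omega>))^2\<bar> \<le> c^2" if "\<omega> \<in> space M" for \<omega>
      using norm_X_le[OF j that] by (simp add: power_mono)
  qed (use X_measurable[OF j] in measurable)
  have "(\<integral>\<omega>. smooth_exp \<mu> (X j \<omega>) \<partial>M)
          \<le> (\<integral>\<omega>. exp 1 + 3 * \<mu>^2 * exp 1 * (norm (X j \<omega>))^2 \<partial>M)"
    using integrable_smooth_exp[OF X_measurable[OF j] \<mu>(1) norm_X_le[OF j]] int_sq pointwise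
    by (intro integral_mono) auto
  also have "\<dots> = exp 1 + 3 * \<mu>^2 * exp 1 * (\<integral>\<omega>. (norm (X j \<omega>))^2 \<partial>M)"
    using int_sq by (simp add: prob_space)
  also have "\<dots> \<le> exp 1 + 3 * \<mu>^2 * exp 1 * \<sigma>^2"
    using second_moment_X_le[OF j] by (intro add_left_mono mult_left_mono) auto
  finally show ?thesis by (simp add: algebra_simps)
qed

end

locale tau_mixing_lag = bounded_centered_process +
  fixes k :: nat and \<tau>0 :: real
  assumes tau_mix_le: "tau_mix M X c k \<le> ereal \<tau>0"
    and tau0_nonneg: "\<tau>0 \<ge> 0"
begin

lemma AE_cond_exp_deviation_le:
  assumes "\<phi> \<in> lipC1 c" "i \<ge> 1"
  shows "AE \<omega> in M. \<bar>real_cond_exp M (hist M X i) (\<lambda>\<omega>. \<phi> (X (i + k) \<omega>)) \<omega>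
                        - (\<integral>\<omega>'. \<phi> (X (i + k) \<omega>') \<partial>M)\<bar> \<le> \<tau>0"
proof -
  let ?g = "\<lambda>\<omega>. ereal \<bar>real_cond_exp M (hist M X i) (\<lambda>\<omega>. \<phi> (X (i + k) \<omega>)) \<omega>
                        - (\<integral>\<omega>'. \<phi> (X (i + k) \<omega>') \<partial>M)\<bar>"
  have "esssup M ?g \<le> tau_mix M X c k"
    unfolding tau_mix_def by (rule SUP_upper2[of "(\<phi>, i)"]) (use assms in auto)
  then have "esssup M ?g \<le> ereal \<tau>0" using tau_mix_le by (rule order_trans)
  moreover have "AE \<omega> in M. ?g \<omega> \<le> esssup M ?g" by (rule esssup_AE)
  ultimately have "AE \<omega> in M. ?g \<omega> \<le> ereal \<tau>0"
    by (auto elim!: eventually_mono dest: order_trans)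
  then show ?thesis by (rule eventually_mono) simp
qed

lemma weighted_integral_lipC1_le:
  assumes \<phi>: "\<phi> \<in> lipC1 c" and i: "i \<ge> 1"
    and w_meas: "w \<in> borel_measurable (hist M X i)"
    and w_nonneg: "\<And>\<omega>. \<omega> \<in> space M \<Longrightarrow> 0 \<le> w \<omega>"
    and w_le: "\<And>\<omega>. \<omega> \<in> space M \<Longrightarrow> w \<omega> \<le> B"
  shows "(\<integral>\<omega>. w \<omega> * \<phi> (X (i + k) \<omega>) \<partial>M)
           \<le> (\<integral>\<omega>. w \<omega> \<partial>M) * ((\<integral>\<omega>. \<phi> (X (i + k) \<omega>) \<partial>M) + \<tau>0)"
proof -
  interpret S: sigma_finite_subalgebra M "hist M X i" by (rule sigma_finite_subalgebra_hist)
  let ?Y = "\<lambda>\<omega>. \<phi> (X (i + k) \<omega>)"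
  let ?E = "\<integral>\<omega>. \<phi> (X (i + k) \<omega>) \<partial>M"
  obtain K where K: "\<And>y. norm y \<le> c \<Longrightarrow> \<bar>\<phi> y\<bar> \<le> K" using lipC1_bounded[OF \<phi>] by blast
  have ik: "i + k \<ge> 1" using i by simp
  have Y_meas: "?Y \<in> borel_measurable M" by (rule lipC1_comp_X_measurable[OF \<phi> ik])
  have w_meas': "w \<in> borel_measurable M" by (rule measurable_hist_imp_measurable[OF w_meas])
  have "integrable M w"
    by (rule integrable_bounded[OF w_meas']) (use w_nonneg w_le in auto)
  have "integrable M (\<lambda>\<omega>. w \<omega> * ?Y \<omega>)"
    using w_meas' Y_meas w_nonneg w_le K[OF norm_X_le[OF ik]]
    by (intro integrable_mult_bounded[where A=B and C=K]) auto
  note cond_exp = S.real_cond_exp_intg[OF this w_meas Y_meas]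
  have "(\<integral>\<omega>. w \<omega> * real_cond_exp M (hist M X i) ?Y \<omega> \<partial>M) \<le> (\<integral>\<omega>. w \<omega> * (?E + \<tau>0) \<partial>M)"
  proof (rule integral_mono_AE[OF cond_exp(1)])
    show "AE \<omega> in M. w \<omega> * real_cond_exp M (hist M X i) ?Y \<omega> \<le> w \<omega> * (?E + \<tau>0)"
      using AE_cond_exp_deviation_le[OF \<phi> i] AE_space
    proof eventually_elim
      case (elim \<omega>)
      then show ?case using w_nonneg[OF elim(2)] by (intro mult_left_mono) auto
    qed
  qed (use \<open>integrable M w\<close> in simp)
  then show ?thesis using cond_exp(2) by simp
qed

lemma weighted_integral_inner_const_le:
  assumes i: "i \<ge> 1"
    and w_meas: "w \<in> borel_measurable (hist M X i)"
    and w_nonneg: "\<And>\<omega>. \<omega> \<in> space M \<Longrightarrow> 0 \<le> w \<omega>"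
    and w_le: "\<And>\<omega>. \<omega> \<in> space M \<Longrightarrow> w \<omega> \<le> B"
  shows "(\<integral>\<omega>. w \<omega> * (v \<bullet> X (i + k) \<omega>) \<partial>M) \<le> \<tau>0 * norm v * (\<integral>\<omega>. w \<omega> \<partial>M)"
proof (cases "v = 0")
  case False
  have ik: "i + k \<ge> 1" using i by simp
  let ?W = "\<integral>\<omega>. w \<omega> \<partial>M"
  have mean_zero: "(\<integral>\<omega>. (v \<bullet> X (i + k) \<omega>) / norm v \<partial>M) = 0"
    using integral_X_eq_0[OF ik] integrable_X[OF ik] by simp
  have "(\<integral>\<omega>. w \<omega> * (v \<bullet> X (i + k) \<omega>) \<partial>M)
          = (\<integral>\<omega>. norm v * (w \<omega> * ((v \<bullet> X (i + k) \<omega>) / norm v)) \<partial>M)"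
    using False by (intro Bochner_Integration.integral_cong) auto
  also have "\<dots> = norm v * (\<integral>\<omega>. w \<omega> * ((v \<bullet> X (i + k) \<omega>) / norm v) \<partial>M)"
    by (rule integral_mult_right_zero)
  also have "\<dots> \<le> norm v * (?W * ((\<integral>\<omega>. (v \<bullet> X (i + k) \<omega>) / norm v \<partial>M) + \<tau>0))"
    using weighted_integral_lipC1_le[OF lipC1_inner_normalized[OF False] i w_meas w_nonneg w_le]
    by (intro mult_left_mono) auto
  also have "\<dots> = \<tau>0 * norm v * ?W" unfolding mean_zero by simp
  finally show ?thesis .
qed simp

lemma weighted_integral_norm_sq_le:
  assumes i: "i \<ge> 1"
    and w_meas: "w \<in> borel_measurable (hist M X i)"
    and w_nonneg: "\<And>\<omega>. \<omega> \<in> space M \<Longrightarrow> 0 \<le> w \<omega>"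
    and w_le: "\<And>\<omega>. \<omega> \<in> space M \<Longrightarrow> w \<omega> \<le> B"
  shows "(\<integral>\<omega>. w \<omega> * (norm (X (i + k) \<omega>))^2 \<partial>M) \<le> (\<integral>\<omega>. w \<omega> \<partial>M) * (\<sigma>^2 + 2 * c * \<tau>0)"
proof -
  have ik: "i + k \<ge> 1" using i by simp
  let ?W = "\<integral>\<omega>. w \<omega> \<partial>M"
  let ?Y2 = "\<lambda>\<omega>. (norm (X (i + k) \<omega>))^2"
  have "?W \<ge> 0" using w_nonneg by (intro integral_nonneg_AE AE_I2) auto
  have "(\<integral>\<omega>. w \<omega> * ?Y2 \<omega> \<partial>M) = (\<integral>\<omega>. (2 * c) * (w \<omega> * (?Y2 \<omega> / (2 * c))) \<partial>M)"
    using c_pos by (intro Bochner_Integration.integral_cong) auto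
  also have "\<dots> = (2 * c) * (\<integral>\<omega>. w \<omega> * (?Y2 \<omega> / (2 * c)) \<partial>M)"
    by (rule integral_mult_right_zero)
  also have "\<dots> \<le> (2 * c) * (?W * ((\<integral>\<omega>. ?Y2 \<omega> / (2 * c) \<partial>M) + \<tau>0))"
    using weighted_integral_lipC1_le[OF lipC1_norm_sq[OF c_pos] i w_meas w_nonneg w_le] c_pos
    by (intro mult_left_mono) auto
  also have "(\<integral>\<omega>. ?Y2 \<omega> / (2 * c) \<partial>M) = (\<integral>\<omega>. ?Y2 \<omega> \<partial>M) / (2 * c)"
    by (rule integral_divide_zero)
  also have "(2 * c) * (?W * ((\<integral>\<omega>. ?Y2 \<omega> \<partial>M) / (2 * c) + \<tau>0))
               = ?W * ((\<integral>\<omega>. ?Y2 \<omega> \<partial>M) + 2 * c * \<tau>0)"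
    using c_pos by (simp add: field_simps)
  also have "\<dots> \<le> ?W * (\<sigma>^2 + 2 * c * \<tau>0)"
    using second_moment_X_le[OF ik] \<open>?W \<ge> 0\<close> by (intro mult_left_mono) auto
  finally show ?thesis .
qed

lemma weighted_integral_inner_simple_le:
  assumes i: "i \<ge> 1"
    and w_meas: "w \<in> borel_measurable (hist M X i)"
    and w_nonneg: "\<And>\<omega>. \<omega> \<in> space M \<Longrightarrow> 0 \<le> w \<omega>"
    and w_le: "\<And>\<omega>. \<omega> \<in> space M \<Longrightarrow> w \<omega> \<le> B"
    and s: "simple_function (hist M X i) s"
  shows "(\<integral>\<omega>. w \<omega> * (s \<omega> \<bullet> X (i + k) \<omega>) \<partial>M) \<le> \<tau>0 * (\<integral>\<omega>. w \<omega> * norm (s \<omega>) \<partial>M)"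
proof -
  let ?Y = "X (i + k)"
  define V where "V = s ` space M"
  define A where "A v = s -` {v} \<inter> space M" for v
  have ik: "i + k \<ge> 1" using i by simp
  have "finite V" unfolding V_def using simple_functionD(1)[OF s] by simp
  have A_hist: "A v \<in> sets (hist M X i)" for v
    unfolding A_def using simple_functionD(2)[OF s, of "{v}"] by simp
  have wA_meas: "(\<lambda>\<omega>. w \<omega> * indicator (A v) \<omega>) \<in> borel_measurable (hist M X i)" for v
    using w_meas A_hist by (intro borel_measurable_times borel_measurable_indicator)
  have "B \<ge> 0" using w_nonneg w_le not_empty by (meson ex_in_conv order_trans)
  then have wA_nonneg: "0 \<le> w \<omega> * indicator (A v) \<omega>" and wA_le: "w \<omega> * indicator (A v) \<omega> \<le> B"
    if "\<omega> \<in> space M" for \<omega> v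
    using w_nonneg[OF that] w_le[OF that] by (auto simp: indicator_def)
  have sum_levels: "(\<Sum>v\<in>V. w \<omega> * indicator (A v) \<omega> * g v) = w \<omega> * g (s \<omega>)"
    if "\<omega> \<in> space M" for \<omega> and g :: "_ \<Rightarrow> real"
  proof -
    have "(\<Sum>v\<in>V. w \<omega> * indicator (A v) \<omega> * g v) = (\<Sum>v\<in>V. if s \<omega> = v then w \<omega> * g v else 0)"
      using that unfolding A_def by (intro sum.cong) (auto simp: indicator_def)
    also have "\<dots> = w \<omega> * g (s \<omega>)" using \<open>finite V\<close> that unfolding V_def by simp
    finally show ?thesis .
  qed
  have int_inner: "integrable M (\<lambda>\<omega>. w \<omega> * indicator (A v) \<omega> * (v \<bullet> ?Y \<omega>))" for v
  proof (rule integrable_mult_bounded[where A=B and C="norm v * c"])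
    show "\<bar>v \<bullet> ?Y \<omega>\<bar> \<le> norm v * c" if "\<omega> \<in> space M" for \<omega>
      using Cauchy_Schwarz_ineq2[of v "?Y \<omega>"] norm_X_le[OF ik that]
      by (meson mult_left_mono norm_ge_zero order_trans)
  qed (use wA_meas wA_nonneg wA_le X_measurable[OF ik] in
        \<open>auto intro: measurable_hist_imp_measurable\<close>)
  have int_norm: "integrable M (\<lambda>\<omega>. w \<omega> * indicator (A v) \<omega> * norm v)" for v
    using wA_meas wA_nonneg wA_le by (intro integrable_mult_bounded[where A=B and C="norm v"])
      (auto intro: measurable_hist_imp_measurable)
  have "(\<integral>\<omega>. w \<omega> * (s \<omega> \<bullet> ?Y \<omega>) \<partial>M)
          = (\<integral>\<omega>. (\<Sum>v\<in>V. w \<omega> * indicator (A v) \<omega> * (v \<bullet> ?Y \<omega>)) \<partial>M)"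
    by (intro Bochner_Integration.integral_cong refl) (simp add: sum_levels)
  also have "\<dots> = (\<Sum>v\<in>V. (\<integral>\<omega>. w \<omega> * indicator (A v) \<omega> * (v \<bullet> ?Y \<omega>) \<partial>M))"
    by (rule Bochner_Integration.integral_sum[OF int_inner])
  also have "\<dots> \<le> (\<Sum>v\<in>V. \<tau>0 * norm v * (\<integral>\<omega>. w \<omega> * indicator (A v) \<omega> \<partial>M))"
    using wA_meas wA_nonneg wA_le by (intro sum_mono weighted_integral_inner_const_le[OF i])
  also have "\<dots> = \<tau>0 * (\<Sum>v\<in>V. (\<integral>\<omega>. w \<omega> * indicator (A v) \<omega> * norm v \<partial>M))"
    by (simp add: sum_distrib_left mult_ac)
  also have "\<dots> = \<tau>0 * (\<integral>\<omega>. (\<Sum>v\<in>V. w \<omega> * indicator (A v) \<omega> * norm v) \<partial>M)"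
    by (simp only: Bochner_Integration.integral_sum[OF int_norm])
  also have "\<dots> = \<tau>0 * (\<integral>\<omega>. w \<omega> * norm (s \<omega>) \<partial>M)"
    by (intro arg_cong[where f="(*) \<tau>0"] Bochner_Integration.integral_cong refl)
      (simp add: sum_levels)
  finally show ?thesis .
qed

text \<open>A past-measurable random direction is reduced to the previous lemma by approximating it
  with simple functions and passing to the limit by dominated convergence.\<close>

lemma weighted_integral_inner_le:
  assumes i: "i \<ge> 1"
    and w_meas: "w \<in> borel_measurable (hist M X i)"
    and w_nonneg: "\<And>\<omega>. \<omega> \<in> space M \<Longrightarrow> 0 \<le> w \<omega>"
    and w_le: "\<And>\<omega>. \<omega> \<in> space M \<Longrightarrow> w \<omega> \<le> B"
    and u_meas: "u \<in> borel_measurable (hist M X i)"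
    and norm_u: "\<And>\<omega>. \<omega> \<in> space M \<Longrightarrow> norm (u \<omega>) \<le> 1"
  shows "(\<integral>\<omega>. w \<omega> * (u \<omega> \<bullet> X (i + k) \<omega>) \<partial>M) \<le> \<tau>0 * (\<integral>\<omega>. w \<omega> \<partial>M)"
proof -
  let ?Y = "X (i + k)"
  have ik: "i + k \<ge> 1" using i by simp
  have w_meas': "w \<in> borel_measurable M" by (rule measurable_hist_imp_measurable[OF w_meas])
  have u_meas': "u \<in> borel_measurable M" by (rule measurable_hist_imp_measurable[OF u_meas])
  obtain s where s_simple: "\<And>j. simple_function (hist M X i) (s j)"
    and s_lim: "\<And>\<omega>. \<omega> \<in> space M \<Longrightarrow> (\<lambda>j. s j \<omega>) \<longlonglongrightarrow> u \<omega>"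
    and s_le: "\<And>j \<omega>. \<omega> \<in> space M \<Longrightarrow> norm (s j \<omega>) \<le> 2 * norm (u \<omega>)"
    using borel_measurable_implies_sequence_metric[OF u_meas, of 0]
    unfolding space_hist dist_norm diff_zero by blast
  have norm_s: "norm (s j \<omega>) \<le> 2" if "\<omega> \<in> space M" for j \<omega>
    using s_le[OF that, of j] norm_u[OF that] by simp
  have s_meas: "s j \<in> borel_measurable M" for j
    by (rule measurable_hist_imp_measurable[OF borel_measurable_simple_function[OF s_simple]])
  have "(\<lambda>j. \<integral>\<omega>. w \<omega> * (s j \<omega> \<bullet> ?Y \<omega>) \<partial>M) \<longlonglongrightarrow> (\<integral>\<omega>. w \<omega> * (u \<omega> \<bullet> ?Y \<omega>) \<partial>M)"
  proof (rule integral_dominated_convergence[where w="\<lambda>_. B * (2 * c)"])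
    show "AE \<omega> in M. norm (w \<omega> * (s j \<omega> \<bullet> ?Y \<omega>)) \<le> B * (2 * c)" for j
    proof (rule AE_I2)
      fix \<omega> assume \<omega>: "\<omega> \<in> space M"
      have "\<bar>s j \<omega> \<bullet> ?Y \<omega>\<bar> \<le> norm (s j \<omega>) * norm (?Y \<omega>)" by (rule Cauchy_Schwarz_ineq2)
      also have "\<dots> \<le> 2 * c" using norm_s[OF \<omega>] norm_X_le[OF ik \<omega>] by (intro mult_mono) auto
      finally have "\<bar>w \<omega>\<bar> * \<bar>s j \<omega> \<bullet> ?Y \<omega>\<bar> \<le> B * (2 * c)"
        using w_nonneg[OF \<omega>] w_le[OF \<omega>] by (intro mult_mono) auto
      then show "norm (w \<omega> * (s j \<omega> \<bullet> ?Y \<omega>)) \<le> B * (2 * c)" by (simp add: abs_mult)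
    qed
  qed (use w_meas' u_meas' s_meas X_measurable[OF ik] s_lim in
        \<open>auto intro!: tendsto_mult_left tendsto_inner\<close>)
  moreover have "(\<lambda>j. \<tau>0 * (\<integral>\<omega>. w \<omega> * norm (s j \<omega>) \<partial>M)) \<longlonglongrightarrow> \<tau>0 * (\<integral>\<omega>. w \<omega> * norm (u \<omega>) \<partial>M)"
  proof (intro tendsto_mult_left integral_dominated_convergence[where w="\<lambda>_. B * 2"])
    show "AE \<omega> in M. norm (w \<omega> * norm (s j \<omega>)) \<le> B * 2" for j
    proof (rule AE_I2)
      fix \<omega> assume \<omega>: "\<omega> \<in> space M"
      have "\<bar>w \<omega>\<bar> * norm (s j \<omega>) \<le> B * 2"
        using w_nonneg[OF \<omega>] w_le[OF \<omega>] norm_s[OF \<omega>] by (intro mult_mono) auto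
      then show "norm (w \<omega> * norm (s j \<omega>)) \<le> B * 2" by (simp add: abs_mult)
    qed
  qed (use w_meas' u_meas' s_meas s_lim in \<open>auto intro!: tendsto_mult_left tendsto_norm\<close>)
  moreover have "(\<integral>\<omega>. w \<omega> * (s j \<omega> \<bullet> ?Y \<omega>) \<partial>M) \<le> \<tau>0 * (\<integral>\<omega>. w \<omega> * norm (s j \<omega>) \<partial>M)" for j
    by (rule weighted_integral_inner_simple_le[OF i w_meas w_nonneg w_le s_simple])
  ultimately have "(\<integral>\<omega>. w \<omega> * (u \<omega> \<bullet> ?Y \<omega>) \<partial>M) \<le> \<tau>0 * (\<integral>\<omega>. w \<omega> * norm (u \<omega>) \<partial>M)"
    by (intro LIMSEQ_le) auto
  also have "\<dots> \<le> \<tau>0 * (\<integral>\<omega>. w \<omega> \<partial>M)"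
  proof (intro mult_left_mono tau0_nonneg integral_mono)
    show "integrable M w" by (rule integrable_bounded[OF w_meas']) (use w_nonneg w_le in auto)
    show "integrable M (\<lambda>\<omega>. w \<omega> * norm (u \<omega>))"
      using w_meas' u_meas' w_nonneg w_le norm_u
      by (intro integrable_mult_bounded[where A=B and C=1]) auto
    show "w \<omega> * norm (u \<omega>) \<le> w \<omega>" if "\<omega> \<in> space M" for \<omega>
      using w_nonneg[OF that] norm_u[OF that] by (metis mult_left_le)
  qed
  finally show ?thesis .
qed

lemma integral_smooth_exp_add_le:
  assumes i: "i \<ge> 1"
    and T_meas: "T \<in> borel_measurable (hist M X i)"
    and norm_T: "\<And>\<omega>. \<omega> \<in> space M \<Longrightarrow> norm (T \<omega>) \<le> R"
    and \<mu>: "\<mu> > 0" "\<mu> * c \<le> 1/2"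
  shows "(\<integral>\<omega>. smooth_exp \<mu> (T \<omega> + X (i + k) \<omega>) \<partial>M)
           \<le> (\<integral>\<omega>. smooth_exp \<mu> (T \<omega>) \<partial>M) * (1 + \<mu> * \<tau>0 + 3 * \<mu>^2 * (\<sigma>^2 + 2 * c * \<tau>0))"
proof -
  let ?Y = "X (i + k)"
  define w where "w \<omega> = smooth_exp \<mu> (T \<omega>)" for \<omega>
  define u where "u \<omega> = T \<omega> /\<^sub>R smooth_norm \<mu> (T \<omega>)" for \<omega>
  define B where "B = exp (\<mu> * R + 1)"
  have ik: "i + k \<ge> 1" using i by simp
  have T_meas': "T \<in> borel_measurable M" by (rule measurable_hist_imp_measurable[OF T_meas])
  have w_meas: "w \<in> borel_measurable (hist M X i)"
    unfolding w_def by (rule borel_measurable_smooth_exp[OF T_meas])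
  have u_meas: "u \<in> borel_measurable (hist M X i)"
    unfolding u_def by (rule borel_measurable_smooth_direction[OF T_meas])
  have w_nonneg: "0 \<le> w \<omega>" for \<omega> unfolding w_def using smooth_exp_pos less_imp_le by blast
  have w_le: "w \<omega> \<le> B" if "\<omega> \<in> space M" for \<omega>
    unfolding w_def B_def using smooth_exp_le[OF \<mu>(1) norm_T[OF that]] .
  have norm_u: "norm (u \<omega>) \<le> 1" for \<omega> unfolding u_def by (rule norm_smooth_direction_le[OF \<mu>(1)])
  have norm_Y: "norm (?Y \<omega>) \<le> c" if "\<omega> \<in> space M" for \<omega> by (rule norm_X_le[OF ik that])
  have pointwise: "smooth_exp \<mu> (T \<omega> + ?Y \<omega>)
                     \<le> w \<omega> + \<mu> * (w \<omega> * (u \<omega> \<bullet> ?Y \<omega>)) + 3 * \<mu>^2 * (w \<omega> * (norm (?Y \<omega>))^2)"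
    if "\<omega> \<in> space M" for \<omega>
  proof -
    have "\<mu> * norm (?Y \<omega>) \<le> \<mu> * c" using norm_Y[OF that] \<mu>(1) by (intro mult_left_mono) auto
    then have "smooth_exp \<mu> (T \<omega> + ?Y \<omega>)
                 \<le> w \<omega> * (1 + \<mu> * (u \<omega> \<bullet> ?Y \<omega>) + 3 * \<mu>^2 * (norm (?Y \<omega>))^2)"
      unfolding w_def u_def using \<mu>(2) by (intro smooth_exp_add_le[OF \<mu>(1)]) simp
    then show ?thesis by (simp add: algebra_simps)
  qed
  have int_w: "integrable M w"
    unfolding w_def by (rule integrable_smooth_exp[OF T_meas' \<mu>(1) norm_T])
  have w_meas': "w \<in> borel_measurable M" by (rule measurable_hist_imp_measurable[OF w_meas])
  have int_inner: "integrable M (\<lambda>\<omega>. w \<omega> * (u \<omega> \<bullet> ?Y \<omega>))"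
  proof (rule integrable_mult_bounded[where A=B and C=c])
    fix \<omega> assume "\<omega> \<in> space M"
    then have "norm (u \<omega>) * norm (?Y \<omega>) \<le> 1 * c"
      using norm_u[of \<omega>] norm_Y by (intro mult_mono) auto
    then show "\<bar>u \<omega> \<bullet> ?Y \<omega>\<bar> \<le> c" using Cauchy_Schwarz_ineq2[of "u \<omega>" "?Y \<omega>"] by simp
  qed (use w_meas' measurable_hist_imp_measurable[OF u_meas] X_measurable[OF ik] w_nonneg w_le in
        \<open>auto intro: borel_measurable_inner\<close>)
  have int_sq: "integrable M (\<lambda>\<omega>. w \<omega> * (norm (?Y \<omega>))^2)"
    using w_meas' X_measurable[OF ik] w_nonneg w_le norm_Y c_pos
    by (intro integrable_mult_bounded[where A=B and C="c^2"]) (auto intro: power_mono)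
  have int_sum: "integrable M (\<lambda>\<omega>. smooth_exp \<mu> (T \<omega> + ?Y \<omega>))"
  proof (rule integrable_smooth_exp[OF _ \<mu>(1)])
    show "norm (T \<omega> + ?Y \<omega>) \<le> R + c" if "\<omega> \<in> space M" for \<omega>
      using norm_T[OF that] norm_Y[OF that] by (intro norm_triangle_le add_mono)
  qed (use T_meas' X_measurable[OF ik] in measurable)
  have "(\<integral>\<omega>. smooth_exp \<mu> (T \<omega> + ?Y \<omega>) \<partial>M)
          \<le> (\<integral>\<omega>. w \<omega> + \<mu> * (w \<omega> * (u \<omega> \<bullet> ?Y \<omega>)) + 3 * \<mu>^2 * (w \<omega> * (norm (?Y \<omega>))^2) \<partial>M)"
    using int_sum int_w int_inner int_sq pointwise by (intro integral_mono) auto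
  also have "\<dots> = (\<integral>\<omega>. w \<omega> \<partial>M) + \<mu> * (\<integral>\<omega>. w \<omega> * (u \<omega> \<bullet> ?Y \<omega>) \<partial>M)
                    + 3 * \<mu>^2 * (\<integral>\<omega>. w \<omega> * (norm (?Y \<omega>))^2 \<partial>M)"
    using int_w int_inner int_sq by simp
  also have "\<dots> \<le> (\<integral>\<omega>. w \<omega> \<partial>M) + \<mu> * (\<tau>0 * (\<integral>\<omega>. w \<omega> \<partial>M))
                    + 3 * \<mu>^2 * ((\<integral>\<omega>. w \<omega> \<partial>M) * (\<sigma>^2 + 2 * c * \<tau>0))"
    using weighted_integral_inner_le[OF i w_meas w_nonneg w_le u_meas norm_u]
      weighted_integral_norm_sq_le[OF i w_meas w_nonneg w_le] \<mu>(1)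
    by (intro add_mono mult_left_mono) auto
  finally show ?thesis unfolding w_def by (simp add: algebra_simps)
qed

lemma integral_smooth_exp_progression_le:
  assumes r: "r \<ge> 1" and \<mu>: "\<mu> > 0" "\<mu> * c \<le> 1/2"
  shows "(\<integral>\<omega>. smooth_exp \<mu> (\<Sum>j\<le>m. X (r + j * k) \<omega>) \<partial>M)
           \<le> exp 1 * (1 + (\<mu> * \<tau>0 + 3 * \<mu>^2 * (\<sigma>^2 + 2 * c * \<tau>0))) ^ Suc m"
proof (induction m)
  case 0
  have "0 \<le> \<mu> * \<tau>0 + 3 * \<mu>^2 * (2 * c * \<tau>0)" using \<mu>(1) c_pos tau0_nonneg by simp
  then have "1 + 3 * \<mu>^2 * \<sigma>^2 \<le> 1 + (\<mu> * \<tau>0 + 3 * \<mu>^2 * (\<sigma>^2 + 2 * c * \<tau>0))"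
    by (simp add: algebra_simps)
  then have "exp 1 * (1 + 3 * \<mu>^2 * \<sigma>^2) \<le> exp 1 * (1 + (\<mu> * \<tau>0 + 3 * \<mu>^2 * (\<sigma>^2 + 2 * c * \<tau>0)))"
    by simp
  with integral_smooth_exp_X_le[OF r \<mu>]
  have "(\<integral>\<omega>. smooth_exp \<mu> (X r \<omega>) \<partial>M) \<le> exp 1 * (1 + (\<mu> * \<tau>0 + 3 * \<mu>^2 * (\<sigma>^2 + 2 * c * \<tau>0)))"
    by (rule order_trans)
  then show ?case by simp
next
  case (Suc m)
  let ?q = "\<mu> * \<tau>0 + 3 * \<mu>^2 * (\<sigma>^2 + 2 * c * \<tau>0)"
  let ?T = "\<lambda>\<omega>. \<Sum>j\<le>m. X (r + j * k) \<omega>"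
  have T_meas: "?T \<in> borel_measurable (hist M X (r + m * k))"
    using r by (intro borel_measurable_sum X_measurable_hist) (auto simp: mult_right_mono)
  have norm_T: "norm (?T \<omega>) \<le> real (card {..m}) * c" if "\<omega> \<in> space M" for \<omega>
    using r that by (intro norm_sum_X_le) auto
  have "(\<Sum>j\<le>Suc m. X (r + j * k) \<omega>) = ?T \<omega> + X (r + m * k + k) \<omega>" for \<omega>
    by (simp add: algebra_simps)
  then have "(\<integral>\<omega>. smooth_exp \<mu> (\<Sum>j\<le>Suc m. X (r + j * k) \<omega>) \<partial>M)
               \<le> (\<integral>\<omega>. smooth_exp \<mu> (?T \<omega>) \<partial>M) * (1 + ?q)"
    using integral_smooth_exp_add_le[OF _ T_meas norm_T \<mu>] r by (simp add: add.assoc)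
  also have "\<dots> \<le> exp 1 * (1 + ?q) ^ Suc m * (1 + ?q)"
    using Suc.IH \<mu>(1) c_pos tau0_nonneg by (intro mult_right_mono) auto
  finally show ?case by (simp add: algebra_simps)
qed

lemma integral_exp_norm_progression_le:
  assumes r: "r \<ge> 1" and \<mu>: "\<mu> > 0" "\<mu> * c \<le> 1/2"
  shows "(\<integral>\<omega>. exp (\<mu> * norm (\<Sum>j\<le>m. X (r + j * k) \<omega>)) \<partial>M)
           \<le> exp (1 + real (Suc m) * (\<mu> * \<tau>0 + 3 * \<mu>^2 * (\<sigma>^2 + 2 * c * \<tau>0)))"
proof -
  let ?q = "\<mu> * \<tau>0 + 3 * \<mu>^2 * (\<sigma>^2 + 2 * c * \<tau>0)"
  let ?T = "\<lambda>\<omega>. \<Sum>j\<le>m. X (r + j * k) \<omega>"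
  have T_meas: "?T \<in> borel_measurable M" using r by (intro borel_measurable_sum X_measurable) auto
  have norm_T: "norm (?T \<omega>) \<le> real (card {..m}) * c" if "\<omega> \<in> space M" for \<omega>
    using r that by (intro norm_sum_X_le) auto
  have "(\<integral>\<omega>. exp (\<mu> * norm (?T \<omega>)) \<partial>M) \<le> (\<integral>\<omega>. smooth_exp \<mu> (?T \<omega>) \<partial>M)"
    using integrable_exp_norm[OF T_meas _ norm_T] integrable_smooth_exp[OF T_meas \<mu>(1) norm_T]
      exp_norm_le_smooth_exp[OF \<mu>(1)] \<mu>(1)
    by (intro integral_mono) auto
  also have "\<dots> \<le> exp 1 * (1 + ?q) ^ Suc m" by (rule integral_smooth_exp_progression_le[OF r \<mu>])
  also have "\<dots> \<le> exp 1 * exp ?q ^ Suc m"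
    using \<mu>(1) c_pos tau0_nonneg by (intro mult_left_mono power_mono) (auto simp: add.commute)
  also have "\<dots> = exp (1 + real (Suc m) * ?q)" by (simp only: exp_add exp_of_nat_mult)
  finally show ?thesis .
qed

lemma integral_exp_norm_block_le:
  assumes r: "r \<ge> 1" and l: "l \<ge> 1" "l \<le> Suc m" and \<theta>: "\<theta> > 0" "2 * \<theta> * c \<le> l"
  shows "(\<integral>\<omega>. exp (\<theta> / Suc m * norm (\<Sum>j\<le>m. X (r + j * k) \<omega>)) \<partial>M)
           \<le> exp (1 + 4 * \<theta> * \<tau>0 + 3 * \<theta>^2 * \<sigma>^2 / l)"
proof -
  define N where "N = real (Suc m)"
  define \<mu> where "\<mu> = \<theta> / N"
  have N: "N > 0" "real l \<le> N" unfolding N_def using l by auto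
  have \<mu>: "\<mu> > 0" unfolding \<mu>_def using \<theta> N by simp
  have \<mu>c: "\<mu> * c \<le> 1/2"
    unfolding \<mu>_def using \<theta>(2) N by (simp add: field_simps)
  have "N * (\<mu> * \<tau>0 + 3 * \<mu>^2 * (\<sigma>^2 + 2 * c * \<tau>0))
          = \<theta> * \<tau>0 + 3 * \<theta>^2 * \<sigma>^2 / N + 6 * \<theta> * (\<mu> * c) * \<tau>0"
    unfolding \<mu>_def using N by (simp add: field_simps power2_eq_square)
  also have "\<dots> \<le> \<theta> * \<tau>0 + 3 * \<theta>^2 * \<sigma>^2 / l + 6 * \<theta> * (1/2) * \<tau>0"
    using N l \<theta> \<mu>c tau0_nonneg
    by (intro add_mono mult_right_mono mult_left_mono divide_left_mono) auto
  finally have "1 + N * (\<mu> * \<tau>0 + 3 * \<mu>^2 * (\<sigma>^2 + 2 * c * \<tau>0))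
                  \<le> 1 + 4 * \<theta> * \<tau>0 + 3 * \<theta>^2 * \<sigma>^2 / l" by (simp add: algebra_simps)
  then have "exp (1 + N * (\<mu> * \<tau>0 + 3 * \<mu>^2 * (\<sigma>^2 + 2 * c * \<tau>0)))
               \<le> exp (1 + 4 * \<theta> * \<tau>0 + 3 * \<theta>^2 * \<sigma>^2 / l)" by simp
  with integral_exp_norm_progression_le[OF r \<mu> \<mu>c, of m]
  have "(\<integral>\<omega>. exp (\<mu> * norm (\<Sum>j\<le>m. X (r + j * k) \<omega>)) \<partial>M)
          \<le> exp (1 + 4 * \<theta> * \<tau>0 + 3 * \<theta>^2 * \<sigma>^2 / l)"
    unfolding N_def by linarith
  then show ?thesis unfolding \<mu>_def N_def .
qed

lemma integral_exp_norm_mean_le: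
  assumes n: "n \<ge> 1" and l: "l \<ge> 1" "l \<le> n" and k: "k = n div l"
    and \<theta>: "\<theta> > 0" "2 * \<theta> * c \<le> l"
  shows "(\<integral>\<omega>. exp (\<theta> * norm ((1 / real n) *\<^sub>R (\<Sum>i=1..n. X i \<omega>))) \<partial>M)
           \<le> exp (1 + 4 * \<theta> * \<tau>0 + 3 * \<theta>^2 * \<sigma>^2 / l)"
proof -
  define K where "K = exp (1 + 4 * \<theta> * \<tau>0 + 3 * \<theta>^2 * \<sigma>^2 / l)"
  define N where "N r = Suc ((n - r) div k)" for r
  define T where "T r \<omega> = (\<Sum>j\<le>(n - r) div k. X (r + j * k) \<omega>)" for r \<omega>
  have k1: "k \<ge> 1" unfolding k using l div_le_mono[OF l(2), of l] by simp
  have kn: "k \<le> n" unfolding k by simp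
  have l_le_N: "l \<le> N r" if "r \<in> {1..k}" for r
  proof -
    have "k * l \<le> n" unfolding k by simp
    moreover have "(l - 1) * k = k * l - k" by (simp add: algebra_simps)
    ultimately have "(l - 1) * k \<le> n - r" using that by auto
    then have "l - 1 \<le> (n - r) div k" using k1 by (simp add: less_eq_div_iff_mult_less_eq)
    then show ?thesis unfolding N_def by simp
  qed
  have sum_N: "(\<Sum>r\<in>{1..k}. real (N r)) = real n"
    using sum_atLeastAtMost_residue_classes[OF k1 kn, of "\<lambda>_. 1::real"] unfolding N_def by simp
  have sum_T: "(\<Sum>i=1..n. X i \<omega>) = (\<Sum>r\<in>{1..k}. T r \<omega>)" for \<omega>
    unfolding T_def by (rule sum_atLeastAtMost_residue_classes[OF k1 kn])
  have T_meas: "T r \<in> borel_measurable M" if "r \<in> {1..k}" for r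
    unfolding T_def using that by (intro borel_measurable_sum X_measurable) auto
  have int_T: "integrable M (\<lambda>\<omega>. exp (\<theta> / N r * norm (T r \<omega>)))" if r: "r \<in> {1..k}" for r
    using r \<theta>(1) unfolding T_def
    by (intro integrable_exp_norm[OF T_meas[OF r, unfolded T_def],
          where R="real (card {..(n - r) div k}) * c"] norm_sum_X_le) auto
  have "(\<integral>\<omega>. exp (\<theta> * norm ((1 / real n) *\<^sub>R (\<Sum>i=1..n. X i \<omega>))) \<partial>M)
          \<le> (\<integral>\<omega>. (\<Sum>r\<in>{1..k}. N r / real n * exp (\<theta> / N r * norm (T r \<omega>))) \<partial>M)"
  proof (rule integral_mono)
    show "integrable M (\<lambda>\<omega>. exp (\<theta> * norm ((1 / real n) *\<^sub>R (\<Sum>i=1..n. X i \<omega>))))"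
      using norm_mean_X_le[OF n] \<theta>(1)
      by (intro integrable_exp_norm)
        (auto intro!: borel_measurable_scaleR borel_measurable_sum X_measurable)
    show "exp (\<theta> * norm ((1 / real n) *\<^sub>R (\<Sum>i=1..n. X i \<omega>)))
            \<le> (\<Sum>r\<in>{1..k}. N r / real n * exp (\<theta> / N r * norm (T r \<omega>)))" for \<omega>
      unfolding sum_T using k1 sum_N \<theta>(1)
      by (intro exp_norm_scaled_sum_le) (auto simp: N_def)
  qed (use int_T in auto)
  also have "\<dots> = (\<Sum>r\<in>{1..k}. N r / real n * (\<integral>\<omega>. exp (\<theta> / N r * norm (T r \<omega>)) \<partial>M))"
    using int_T by (subst Bochner_Integration.integral_sum) auto
  also have "\<dots> \<le> (\<Sum>r\<in>{1..k}. N r / real n * K)"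
    unfolding K_def T_def N_def using l_le_N \<theta> l(1)
    by (intro sum_mono mult_left_mono integral_exp_norm_block_le) (auto simp: N_def)
  also have "\<dots> = K" using sum_N n by (simp add: sum_distrib_right[symmetric] sum_divide_distrib[symmetric])
  finally show ?thesis unfolding K_def .
qed

lemma prob_norm_mean_le:
  assumes n: "n \<ge> 1" and l: "l \<ge> 1" "l \<le> n" and k: "k = n div l" and \<sigma>: "\<sigma> > 0"
    and \<tau>0: "\<tau>0 = max (c / l) (\<sigma> / sqrt l)" and L: "L \<ge> 1"
  shows "prob {\<omega> \<in> space M. norm ((1 / real n) *\<^sub>R (\<Sum>i=1..n. X i \<omega>))
                \<le> L * (13 * \<sigma> / sqrt l + 21 * c / l)} \<ge> 1 - exp (- L)"
proof -
  define a where "a = c / l"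
  define s where "s = \<sigma> / sqrt l"
  define \<theta> where "\<theta> = 1 / (2 * s + 2 * a)"
  define t where "t = L * (13 * \<sigma> / sqrt l + 21 * c / l)"
  let ?Z = "\<lambda>\<omega>. norm ((1 / real n) *\<^sub>R (\<Sum>i=1..n. X i \<omega>))"
  have t_sa: "t = L * (13 * s + 21 * a)" unfolding t_def s_def a_def by simp
  have a: "a > 0" unfolding a_def using c_pos l by simp
  have s: "s > 0" unfolding s_def using \<sigma> l by simp
  have \<theta>: "\<theta> > 0" unfolding \<theta>_def using a s by simp
  have "\<theta> \<le> 1 / (2 * a)" unfolding \<theta>_def using a s by (intro divide_left_mono) auto
  then have \<theta>c: "2 * \<theta> * c \<le> l" unfolding a_def using c_pos l by (simp add: field_simps)
  have mean_meas: "(\<lambda>\<omega>. (1 / real n) *\<^sub>R (\<Sum>i=1..n. X i \<omega>)) \<in> borel_measurable M"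
    by (auto intro!: borel_measurable_scaleR borel_measurable_sum X_measurable)
  then have Z_meas: "?Z \<in> borel_measurable M" by (rule measurable_compose[OF _ borel_measurable_norm])
  have chernoff: "prob {\<omega> \<in> space M. ?Z \<omega> \<le> t} \<ge> 1 - (\<integral>\<omega>. exp (\<theta> * ?Z \<omega>) \<partial>M) / exp (\<theta> * t)"
    using Z_meas integrable_exp_norm[OF mean_meas _ norm_mean_X_le[OF n]] \<theta>
    by (intro prob_le_ge_exp_moment) auto
  have moment: "(\<integral>\<omega>. exp (\<theta> * ?Z \<omega>) \<partial>M) / exp (\<theta> * t)
                  \<le> exp (1 + 4 * \<theta> * \<tau>0 + 3 * \<theta>^2 * s^2 - \<theta> * t)"
    using integral_exp_norm_mean_le[OF n l k \<theta> \<theta>c] l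
    by (simp add: s_def power_divide exp_diff divide_right_mono)
  have "\<tau>0 \<le> a + s" unfolding \<tau>0 a_def[symmetric] s_def[symmetric] using a s by linarith
  then have "1 + 4 * \<theta> * \<tau>0 + 3 * \<theta>^2 * s^2 - \<theta> * t \<le> - L"
    unfolding t_sa by (rule chernoff_exponent_le[OF L s a tau0_nonneg _ \<theta>_def])
  then have "exp (1 + 4 * \<theta> * \<tau>0 + 3 * \<theta>^2 * s^2 - \<theta> * t) \<le> exp (- L)" by simp
  with moment have "1 - exp (- L) \<le> 1 - (\<integral>\<omega>. exp (\<theta> * ?Z \<omega>) \<partial>M) / exp (\<theta> * t)" by linarith
  also note chernoff
  finally show ?thesis unfolding t_def .
qed

end

theorem corollary3p4:
  fixes M :: "'a measure"
    and X :: "nat \<Rightarrow> 'a \<Rightarrow> 'h::{real_inner, complete_space, second_countable_topology}"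
    and c \<sigma> \<eta> :: real and n :: nat
  assumes "prob_space M"
    and "c > 0" and "\<sigma> > 0"
    and "\<And>i. i \<ge> 1 \<Longrightarrow> X i \<in> borel_measurable M"
    and "\<And>i \<omega>. i \<ge> 1 \<Longrightarrow> \<omega> \<in> space M \<Longrightarrow> norm (X i \<omega>) \<le> c"
    and "\<And>i. i \<ge> 1 \<Longrightarrow> integrable M (X i)"
    and "\<And>i. i \<ge> 1 \<Longrightarrow> (\<integral>\<omega>. X i \<omega> \<partial>M) = 0"
    and "\<And>i. i \<ge> 1 \<Longrightarrow> (\<integral>\<omega>. (norm (X i \<omega>))^2 \<partial>M) \<le> \<sigma>^2"
    and "n \<ge> 1"
    and "0 < \<eta>" and "\<eta> \<le> 1/2"
  shows "measure M {\<omega> \<in> space M.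
           norm ((1 / real n) *\<^sub>R (\<Sum>i=1..n. X i \<omega>))
             \<le> ln (2 / \<eta>) * (13 * \<sigma> / sqrt (real (lstar M X c \<sigma> n))
                              + 21 * c / real (lstar M X c \<sigma> n))}
         \<ge> 1 - \<eta>"
proof -
  have process: "bounded_centered_process M X c \<sigma>"
    using assms(1-8) by (simp add: bounded_centered_process_def bounded_centered_process_axioms_def)
  then interpret bounded_centered_process M X c \<sigma> .
  define l where "l = lstar M X c \<sigma> n"
  define L where "L = ln (2 / \<eta>)"
  have L: "L \<ge> 1" unfolding L_def using assms(10,11) by (rule ln_two_div_ge_one)
  have "prob {\<omega> \<in> space M. norm ((1 / real n) *\<^sub>R (\<Sum>i=1..n. X i \<omega>))
               \<le> L * (13 * \<sigma> / sqrt l + 21 * c / l)} \<ge> 1 - exp (- L)"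
    using lstar_cases[of M X c \<sigma> n] unfolding l_def[symmetric]
  proof (elim disjE conjE)
    assume "l = 1"
    have "c \<le> 1 * (13 * \<sigma> + 21 * c)" using assms(2,3) by simp
    also have "\<dots> \<le> L * (13 * \<sigma> + 21 * c)" using L assms(2,3) by (intro mult_right_mono) auto
    finally show ?thesis using prob_norm_mean_le_eq_1[OF assms(9)] \<open>l = 1\<close> by simp
  next
    assume l: "l \<in> {1..n}" and tau: "tau_mix M X c (n div l) \<le> ereal (max (c / l) (\<sigma> / sqrt l))"
    interpret tau_mixing_lag M X c \<sigma> "n div l" "max (c / l) (\<sigma> / sqrt l)"
      using process tau assms(2)
      by (intro tau_mixing_lag.intro tau_mixing_lag_axioms.intro) (auto simp: le_max_iff_disj)
    show ?thesis using l assms(3,9) L by (intro prob_norm_mean_le) simp_all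
  qed
  moreover have "exp (- L) = \<eta> / 2" unfolding L_def using assms(10) by (simp add: exp_minus)
  ultimately show ?thesis unfolding l_def[symmetric] L_def[symmetric] using assms(10) by linarith
qed

end
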